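(* Let $p_1,p_2$ be real bivariate polynomials with $p_1\neq 0$, $\deg p_2\le \deg p_1+1$, and suppose $p_1$ has no multiple factors. Then there is $\epsilon_0>0$ such that for every $\epsilon$ with $|\epsilon|<\epsilon_0$ the polynomial $p_1+\epsilon p_2$ has no multiple factors.
   Context: A polynomial $p$ has a multiple factor if $r^2$ divides $p$ for some polynomial $r$ of degree $\ge 1$. *)

theory Defs
  imports "HOL-Computational_Algebra.Polynomial"
begin

text \<open>Real bivariate polynomials R[x,y] are represented as R[x][y], i.e. the type
  real poly poly: the outer variable is y, coefficients are polynomials in x.\<close>

definition total_degree :: "real poly poly \<Rightarrow> nat" where
  "total_degree p = Max ({0} \<union> {i + degree (coeff p i) | i. coeff p i \<noteq> 0})"

definition has_multiple_factor :: "real poly poly \<Rightarrow> bool" where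
  "has_multiple_factor p \<longleftrightarrow> (\<exists>r. total_degree r \<ge> 1 \<and> r ^ 2 dvd p)"

end

theory Submission
  imports Defs
begin

text \<open>Suppose \<open>p\<^sub>1 + \<epsilon>\<^sub>n p\<^sub>2 = r\<^sub>n\<^sup>2 s\<^sub>n\<close> with \<open>\<epsilon>\<^sub>n \<rightarrow> 0\<close> and \<open>deg r\<^sub>n \<ge> 1\<close>. Normalising
  \<open>r\<^sub>n\<close> and \<open>s\<^sub>n\<close> and passing to a subsequence, they converge coefficientwise to nonzero
  \<open>r\<close> and \<open>s\<close> with \<open>p\<^sub>1 = c r\<^sup>2 s\<close>. Total degree can only drop in the limit, while
  \<open>2 deg r\<^sub>n + deg s\<^sub>n \<le> deg p\<^sub>1 + 1 = 2 deg r + deg s + 1\<close>; so the degree of \<open>r\<close>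
  cannot drop, and \<open>r\<close> is a repeated factor of \<open>p\<^sub>1\<close> of positive degree.\<close>

abbreviation coeff2 :: "real poly poly \<Rightarrow> nat \<Rightarrow> nat \<Rightarrow> real" where
  "coeff2 f i j \<equiv> coeff (coeff f i) j"

lemma finite_total_degree_exponents:
  "finite {i + degree (coeff f i) | i. coeff f i \<noteq> 0}"
proof -
  have "{i + degree (coeff f i) | i. coeff f i \<noteq> 0} \<subseteq> (\<lambda>i. i + degree (coeff f i)) ` {..degree f}"
    using le_degree by fastforce
  then show ?thesis by (rule finite_subset) auto
qed

lemma total_degree_le_iff:
  "total_degree f \<le> k \<longleftrightarrow> (\<forall>i j. coeff2 f i j \<noteq> 0 \<longrightarrow> i + j \<le> k)"
proof -
  have "total_degree f \<le> k \<longleftrightarrow> (\<forall>i. coeff f i \<noteq> 0 \<longrightarrow> i + degree (coeff f i) \<le> k)"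
    unfolding total_degree_def using finite_total_degree_exponents[of f] by auto
  also have "\<dots> \<longleftrightarrow> (\<forall>i j. coeff2 f i j \<noteq> 0 \<longrightarrow> i + j \<le> k)"
  proof (intro iffI allI impI)
    fix i j assume "\<forall>i. coeff f i \<noteq> 0 \<longrightarrow> i + degree (coeff f i) \<le> k" "coeff2 f i j \<noteq> 0"
    moreover from this(2) have "coeff f i \<noteq> 0" by auto
    ultimately show "i + j \<le> k" using le_degree[of "coeff f i" j] by force
  qed auto
  finally show ?thesis .
qed

lemma le_total_degree: "coeff2 f i j \<noteq> 0 \<Longrightarrow> i + j \<le> total_degree f"
  using total_degree_le_iff[of f "total_degree f"] by auto

lemma total_degree_attained:
  assumes "f \<noteq> 0"
  obtains i j where "i + j = total_degree f" "coeff2 f i j \<noteq> 0"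
proof -
  let ?S = "{i + degree (coeff f i) | i. coeff f i \<noteq> 0}"
  have "?S \<noteq> {}" using assms by (auto simp: poly_eq_iff)
  then have "total_degree f \<in> ?S"
    unfolding total_degree_def using finite_total_degree_exponents[of f] Max_in[of ?S]
    by simp
  then show ?thesis using that by auto
qed

lemma total_degree_smult_le: "total_degree (smult [:c:] f) \<le> total_degree f"
  unfolding total_degree_le_iff by (auto intro: le_total_degree)

lemma total_degree_smult:
  assumes "c \<noteq> 0"
  shows "total_degree (smult [:c:] f) = total_degree f"
proof -
  have "total_degree (smult [:c:] f) \<le> k \<longleftrightarrow> total_degree f \<le> k" for k
    using assms by (simp add: total_degree_le_iff)
  then show ?thesis by (metis le_antisym order_refl)
qed

lemma total_degree_add_le:
  "total_degree f \<le> k \<Longrightarrow> total_degree g \<le> k \<Longrightarrow> total_degree (f + g) \<le> k"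
  unfolding total_degree_le_iff by (metis add.right_neutral coeff_add)

text \<open>\<open>poly f [:0, c:]\<close> is the restriction \<open>f(x, c x)\<close> to the line \<open>y = c x\<close>; its coefficient
  of \<open>x\<^sup>d\<close>, \<open>d\<close> the total degree, is the top homogeneous part of \<open>f\<close> evaluated at the
  slope \<open>c\<close>. Choosing a slope where the top parts of \<open>f\<close>, \<open>g\<close> and \<open>f g\<close> do not vanish
  reduces additivity of the total degree to that of the univariate degree.\<close>

definition top_form :: "real poly poly \<Rightarrow> real poly" where
  "top_form f = (\<Sum>i\<le>degree f.
     monom (if i \<le> total_degree f then coeff2 f i (total_degree f - i) else 0) i)"

lemma coeff_poly_slope:
  "coeff (poly f [:0, c:]) t = (\<Sum>i\<le>degree f. if i \<le> t then c ^ i * coeff2 f i (t - i) else 0)"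
proof -
  have "[:0, c:] ^ i = monom (c ^ i) i" for i
    by (simp add: monom_power flip: monom_Suc monom_0)
  then show ?thesis
    unfolding poly_altdef coeff_sum
    by (intro sum.cong refl) (auto simp: mult.commute[of "coeff f _"] coeff_monom_mult)
qed

lemma poly_top_form: "poly (top_form f) c = coeff (poly f [:0, c:]) (total_degree f)"
  unfolding top_form_def coeff_poly_slope poly_sum poly_monom
  by (intro sum.cong refl) auto

lemma top_form_nonzero:
  assumes "f \<noteq> 0"
  shows "top_form f \<noteq> 0"
proof -
  obtain i j where ij: "i + j = total_degree f" "coeff2 f i j \<noteq> 0"
    using total_degree_attained[OF assms] .
  then have "i \<le> degree f" by (metis le_degree coeff_0)
  then have "coeff (top_form f) i = coeff2 f i j"
    unfolding top_form_def coeff_sum by (simp add: ij(1)[symmetric])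
  with ij show ?thesis by auto
qed

lemma degree_poly_slope_le: "degree (poly f [:0, c:]) \<le> total_degree f"
proof (rule degree_le, intro allI impI)
  fix t assume "total_degree f < t"
  then show "coeff (poly f [:0, c:]) t = 0"
    unfolding coeff_poly_slope using le_total_degree[of f _ "t - _"]
    by (intro sum.neutral) force
qed

lemma degree_poly_slope:
  "poly (top_form f) c \<noteq> 0 \<Longrightarrow> degree (poly f [:0, c:]) = total_degree f"
  using degree_poly_slope_le[of f c] le_degree[of "poly f [:0, c:]" "total_degree f"]
  by (auto simp: poly_top_form)

lemma total_degree_mult:
  assumes "f \<noteq> 0" "g \<noteq> 0"
  shows "total_degree (f * g) = total_degree f + total_degree g"
proof -
  have "top_form f * top_form g * top_form (f * g) \<noteq> 0"
    using assms by (simp add: top_form_nonzero)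
  then obtain c where "poly (top_form f * top_form g * top_form (f * g)) c \<noteq> 0"
    using poly_all_0_iff_0 by blast
  then have c: "poly (top_form f) c \<noteq> 0" "poly (top_form g) c \<noteq> 0"
    "poly (top_form (f * g)) c \<noteq> 0" by auto
  have "poly f [:0, c:] \<noteq> 0" "poly g [:0, c:] \<noteq> 0"
    using c by (auto simp: poly_top_form)
  then have "degree (poly (f * g) [:0, c:]) = degree (poly f [:0, c:]) + degree (poly g [:0, c:])"
    by (simp add: degree_mult_eq)
  then show ?thesis using degree_poly_slope[OF c(1)] degree_poly_slope[OF c(2)]
      degree_poly_slope[OF c(3)] by linarith
qed

lemma bounded_family_convergent_subseq:
  fixes u :: "nat \<Rightarrow> 'a \<Rightarrow> real"
  assumes "finite S" "\<And>n x. x \<in> S \<Longrightarrow> \<bar>u n x\<bar> \<le> B"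
  obtains \<sigma> L where "strict_mono \<sigma>" "\<And>x. x \<in> S \<Longrightarrow> (\<lambda>n. u (\<sigma> n) x) \<longlonglongrightarrow> L x"
proof -
  have "\<exists>\<sigma> L. strict_mono \<sigma> \<and> (\<forall>x\<in>S. (\<lambda>n. u (\<sigma> n) x) \<longlonglongrightarrow> L x)"
    using assms
  proof (induction S rule: finite_induct)
    case empty
    show ?case by (intro exI[of _ id]) (auto simp: strict_mono_def)
  next
    case (insert a S)
    then obtain \<sigma> L where \<sigma>: "strict_mono \<sigma>" and L: "\<forall>x\<in>S. (\<lambda>n. u (\<sigma> n) x) \<longlonglongrightarrow> L x"
      by auto
    obtain \<tau> where \<tau>: "strict_mono \<tau>" "monoseq (\<lambda>n. u (\<sigma> (\<tau> n)) a)"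
      using seq_monosub[of "\<lambda>n. u (\<sigma> n) a"] by auto
    have "Bseq (\<lambda>n. u (\<sigma> (\<tau> n)) a)"
      using insert.prems by (intro BseqI'[of _ B]) auto
    with \<tau> obtain la where la: "(\<lambda>n. u (\<sigma> (\<tau> n)) a) \<longlonglongrightarrow> la"
      using Bseq_monoseq_convergent convergent_def by blast
    have "\<forall>x\<in>S. (\<lambda>n. u (\<sigma> (\<tau> n)) x) \<longlonglongrightarrow> L x"
      using LIMSEQ_subseq_LIMSEQ[OF _ \<tau>(1)] L by (auto simp: o_def)
    with la show ?case
      using strict_mono_o[OF \<sigma> \<tau>(1)] unfolding o_def
      by (intro exI[of _ "\<sigma> \<circ> \<tau>"] exI[of _ "L(a := la)"]) auto
  qed
  then show ?thesis using that by blast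
qed

definition coeffwise_tendsto :: "(nat \<Rightarrow> real poly poly) \<Rightarrow> real poly poly \<Rightarrow> bool" where
  "coeffwise_tendsto F f \<longleftrightarrow> (\<forall>i j. (\<lambda>n. coeff2 (F n) i j) \<longlonglongrightarrow> coeff2 f i j)"

lemma coeffwise_tendsto_mult:
  assumes "coeffwise_tendsto F f" "coeffwise_tendsto G g"
  shows "coeffwise_tendsto (\<lambda>n. F n * G n) (f * g)"
proof -
  have "coeff2 (f * g) a b = (\<Sum>i\<le>a. \<Sum>j\<le>b. coeff2 f i j * coeff2 g (a - i) (b - j))"
    for f g :: "real poly poly" and a b
    by (simp add: coeff_mult coeff_sum)
  then show ?thesis
    using assms unfolding coeffwise_tendsto_def by (auto intro!: tendsto_sum tendsto_mult)
qed

lemma coeffwise_tendsto_subseq: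
  "coeffwise_tendsto F f \<Longrightarrow> strict_mono \<sigma> \<Longrightarrow> coeffwise_tendsto (\<lambda>n. F (\<sigma> n)) f"
  unfolding coeffwise_tendsto_def using LIMSEQ_subseq_LIMSEQ by (fastforce simp: o_def)

lemma coeffwise_tendsto_perturbation:
  assumes "e \<longlonglongrightarrow> 0"
  shows "coeffwise_tendsto (\<lambda>n. p + smult [:e n:] q) p"
  unfolding coeffwise_tendsto_def
proof (intro allI)
  fix i j
  have "(\<lambda>n. coeff2 p i j + e n * coeff2 q i j) \<longlonglongrightarrow> coeff2 p i j + 0 * coeff2 q i j"
    by (intro tendsto_intros assms)
  then show "(\<lambda>n. coeff2 (p + smult [:e n:] q) i j) \<longlonglongrightarrow> coeff2 p i j"
    by simp
qed

lemma coeffwise_tendsto_eventually_coeff2_nonzero: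
  assumes "coeffwise_tendsto F f" "coeff2 f i j \<noteq> 0"
  shows "eventually (\<lambda>n. coeff2 (F n) i j \<noteq> 0) sequentially"
  using assms unfolding coeffwise_tendsto_def by (intro tendsto_imp_eventually_ne) auto

lemma coeffwise_tendsto_eventually_nonzero:
  assumes "coeffwise_tendsto F f" "f \<noteq> 0"
  shows "eventually (\<lambda>n. F n \<noteq> 0) sequentially"
proof -
  obtain i j where "coeff2 f i j \<noteq> 0"
    using assms(2) by (rule total_degree_attained)
  from coeffwise_tendsto_eventually_coeff2_nonzero[OF assms(1) this] show ?thesis
    by eventually_elim auto
qed

lemma coeffwise_tendsto_eventually_total_degree_ge:
  assumes "coeffwise_tendsto F f"
  shows "eventually (\<lambda>n. total_degree f \<le> total_degree (F n)) sequentially"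
proof (cases "f = 0")
  case False
  then obtain i j where ij: "i + j = total_degree f" "coeff2 f i j \<noteq> 0"
    by (rule total_degree_attained)
  from coeffwise_tendsto_eventually_coeff2_nonzero[OF assms ij(2)] show ?thesis
    by eventually_elim (use ij(1) le_total_degree in metis)
qed (simp add: total_degree_def)

definition box_norm :: "nat \<Rightarrow> real poly poly \<Rightarrow> real" where
  "box_norm K f = (\<Sum>i\<le>K. \<Sum>j\<le>K. \<bar>coeff2 f i j\<bar>)"

lemma abs_coeff2_le_box_norm: "i \<le> K \<Longrightarrow> j \<le> K \<Longrightarrow> \<bar>coeff2 f i j\<bar> \<le> box_norm K f"
  unfolding box_norm_def
  by (rule order_trans[OF _ member_le_sum[of i]]) (auto intro: member_le_sum sum_nonneg)

lemma box_norm_pos: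
  assumes "f \<noteq> 0" "total_degree f \<le> K"
  shows "box_norm K f > 0"
proof -
  obtain i j where "i + j = total_degree f" "coeff2 f i j \<noteq> 0"
    using assms(1) by (rule total_degree_attained)
  with assms(2) show ?thesis
    using abs_coeff2_le_box_norm[of i K j f] by fastforce
qed

lemma box_norm_smult: "box_norm K (smult [:c:] f) = \<bar>c\<bar> * box_norm K f"
  unfolding box_norm_def by (simp add: abs_mult sum_distrib_left)

lemma coeffwise_tendsto_box_norm:
  "coeffwise_tendsto F f \<Longrightarrow> (\<lambda>n. box_norm K (F n)) \<longlonglongrightarrow> box_norm K f"
  unfolding box_norm_def coeffwise_tendsto_def by (intro tendsto_sum tendsto_rabs) auto

definition poly2_of_coeffs :: "nat \<Rightarrow> (nat \<Rightarrow> nat \<Rightarrow> real) \<Rightarrow> real poly poly" where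
  "poly2_of_coeffs K c = (\<Sum>i\<le>K. monom (\<Sum>j\<le>K. monom (c i j) j) i)"

lemma coeff2_poly2_of_coeffs:
  "coeff2 (poly2_of_coeffs K c) i j = (if i \<le> K \<and> j \<le> K then c i j else 0)"
proof -
  have "coeff (if b then p else 0) k = (if b then coeff p k else 0)" for b and p :: "real poly" and k
    by simp
  then show ?thesis
    unfolding poly2_of_coeffs_def coeff_sum coeff_monom by (simp add: coeff_sum)
qed

lemma coeffwise_convergent_subseq:
  fixes F :: "nat \<Rightarrow> real poly poly"
  assumes deg: "\<And>n. total_degree (F n) \<le> K" and bound: "\<And>n i j. \<bar>coeff2 (F n) i j\<bar> \<le> B"
  obtains \<sigma> f where "strict_mono \<sigma>" "coeffwise_tendsto (\<lambda>n. F (\<sigma> n)) f"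
proof -
  obtain \<sigma> L where \<sigma>: "strict_mono \<sigma>"
    and L: "\<And>x. x \<in> {..K} \<times> {..K} \<Longrightarrow> (\<lambda>n. coeff2 (F (\<sigma> n)) (fst x) (snd x)) \<longlonglongrightarrow> L x"
    using bounded_family_convergent_subseq[of "{..K} \<times> {..K}" "\<lambda>n x. coeff2 (F n) (fst x) (snd x)"]
      bound by blast
  have "coeffwise_tendsto (\<lambda>n. F (\<sigma> n)) (poly2_of_coeffs K (\<lambda>i j. L (i, j)))"
    unfolding coeffwise_tendsto_def coeff2_poly2_of_coeffs
  proof (intro allI)
    fix i j
    show "(\<lambda>n. coeff2 (F (\<sigma> n)) i j) \<longlonglongrightarrow> (if i \<le> K \<and> j \<le> K then L (i, j) else 0)"
    proof (cases "i \<le> K \<and> j \<le> K")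
      case False
      then have "coeff2 (F n) i j = 0" for n
        using le_total_degree[of "F n" i j] deg[of n] by (cases "coeff2 (F n) i j = 0") auto
      with False show ?thesis by auto
    qed (use L[of "(i, j)"] in simp)
  qed
  with \<sigma> show ?thesis using that by blast
qed

lemma normalized_convergent_subseq:
  fixes F :: "nat \<Rightarrow> real poly poly"
  assumes nz: "\<And>n. F n \<noteq> 0" and deg: "\<And>n. total_degree (F n) \<le> K"
  obtains \<sigma> G g c where "strict_mono \<sigma>" "coeffwise_tendsto G g" "g \<noteq> 0"
    "\<And>n. F (\<sigma> n) = smult [:c n:] (G n)" "\<And>n. total_degree (G n) = total_degree (F (\<sigma> n))"
proof -
  define a where "a n = box_norm K (F n)" for n
  define G where "G n = smult [:1 / a n:] (F n)" for n
  have a_pos: "a n > 0" for n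
    unfolding a_def using nz deg by (rule box_norm_pos)
  have F_eq: "F n = smult [:a n:] (G n)" for n
    using a_pos[of n] by (simp add: G_def flip: one_pCons)
  have deg_G: "total_degree (G n) = total_degree (F n)" for n
    using a_pos[of n] by (simp add: G_def total_degree_smult)
  have norm_G: "box_norm K (G n) = 1" for n
    using a_pos[of n] by (simp add: G_def box_norm_smult a_def)
  have deg_G_le: "total_degree (G n) \<le> K" for n
    using deg_G deg by simp
  have bound_G: "\<bar>coeff2 (G n) i j\<bar> \<le> 1" for n i j
  proof (cases "i \<le> K \<and> j \<le> K")
    case True
    then show ?thesis using abs_coeff2_le_box_norm[of i K j "G n"] norm_G[of n] by simp
  next
    case False
    then have "coeff2 (G n) i j = 0"
      using le_total_degree[of "G n" i j] deg_G_le[of n]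
      by (cases "coeff2 (G n) i j = 0") auto
    then show ?thesis by simp
  qed
  obtain \<sigma> g where \<sigma>: "strict_mono \<sigma>" and lim: "coeffwise_tendsto (\<lambda>n. G (\<sigma> n)) g"
    using coeffwise_convergent_subseq[of G K 1, OF deg_G_le bound_G] by blast
  have "(\<lambda>n. box_norm K (G (\<sigma> n))) \<longlonglongrightarrow> 1"
    by (simp add: norm_G)
  then have "box_norm K g = 1"
    using coeffwise_tendsto_box_norm[OF lim] LIMSEQ_unique by blast
  then have "g \<noteq> 0" by (auto simp: box_norm_def)
  with \<sigma> lim show ?thesis
    using that[of \<sigma> "\<lambda>n. G (\<sigma> n)" g "\<lambda>n. a (\<sigma> n)"] F_eq deg_G by blast
qed

lemma coeffwise_tendsto_proportional:
  assumes P: "coeffwise_tendsto P p" and Q: "coeffwise_tendsto Q q" and "q \<noteq> 0"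
    and PQ: "\<And>n. P n = smult [:c n:] (Q n)"
  obtains a where "p = smult [:a:] q"
proof -
  obtain i0 j0 where q0: "coeff2 q i0 j0 \<noteq> 0"
    using \<open>q \<noteq> 0\<close> by (rule total_degree_attained)
  define a where "a = coeff2 p i0 j0 / coeff2 q i0 j0"
  have "(\<lambda>n. coeff2 (P n) i0 j0 / coeff2 (Q n) i0 j0) \<longlonglongrightarrow> a"
    unfolding a_def using P Q q0 unfolding coeffwise_tendsto_def by (intro tendsto_divide) auto
  moreover have "eventually (\<lambda>n. coeff2 (P n) i0 j0 / coeff2 (Q n) i0 j0 = c n) sequentially"
    using coeffwise_tendsto_eventually_coeff2_nonzero[OF Q q0]
    by eventually_elim (simp add: PQ)
  ultimately have c: "c \<longlonglongrightarrow> a"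
    by (rule Lim_transform_eventually)
  have coeff_eq: "coeff2 p i j = a * coeff2 q i j" for i j
  proof -
    have "(\<lambda>n. c n * coeff2 (Q n) i j) \<longlonglongrightarrow> a * coeff2 q i j"
      using c Q unfolding coeffwise_tendsto_def by (intro tendsto_mult) auto
    then have "(\<lambda>n. coeff2 (P n) i j) \<longlonglongrightarrow> a * coeff2 q i j"
      by (simp add: PQ)
    moreover have "(\<lambda>n. coeff2 (P n) i j) \<longlonglongrightarrow> coeff2 p i j"
      using P unfolding coeffwise_tendsto_def by blast
    ultimately show ?thesis
      using LIMSEQ_unique by blast
  qed
  have "p = smult [:a:] q"
    by (intro poly_eqI) (simp add: coeff_eq)
  then show ?thesis by (rule that)
qed

lemma coeffwise_limit_of_square_factorizations:
  assumes lim: "coeffwise_tendsto P p" and "p \<noteq> 0"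
    and fac: "\<And>n. P n = r n * r n * s n" and r_nz: "\<And>n. r n \<noteq> 0" and s_nz: "\<And>n. s n \<noteq> 0"
    and deg_r: "\<And>n. total_degree (r n) \<le> K" and deg_s: "\<And>n. total_degree (s n) \<le> K"
  obtains g h m where "p = g * g * h"
    "total_degree g \<le> total_degree (r m)" "total_degree h \<le> total_degree (s m)"
proof -
  obtain \<sigma> G g a where \<sigma>: "strict_mono \<sigma>" and G: "coeffwise_tendsto G g" "g \<noteq> 0"
    and r_eq: "\<And>n. r (\<sigma> n) = smult [:a n:] (G n)"
    and deg_G: "\<And>n. total_degree (G n) = total_degree (r (\<sigma> n))"
    using normalized_convergent_subseq[of r, OF r_nz deg_r] by metis
  obtain \<tau> H h b where \<tau>: "strict_mono \<tau>" and H: "coeffwise_tendsto H h" "h \<noteq> 0"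
    and s_eq: "\<And>n. s (\<sigma> (\<tau> n)) = smult [:b n:] (H n)"
    and deg_H: "\<And>n. total_degree (H n) = total_degree (s (\<sigma> (\<tau> n)))"
    using normalized_convergent_subseq[of "\<lambda>n. s (\<sigma> n)", OF s_nz deg_s] by metis
  define Q where "Q n = G (\<tau> n) * G (\<tau> n) * H n" for n
  have "coeffwise_tendsto (\<lambda>n. P (\<sigma> (\<tau> n))) p"
    using coeffwise_tendsto_subseq[OF lim strict_mono_o[OF \<sigma> \<tau>]] by (simp add: o_def)
  moreover have "coeffwise_tendsto Q (g * g * h)"
    unfolding Q_def
    using coeffwise_tendsto_mult[OF coeffwise_tendsto_mult[OF coeffwise_tendsto_subseq[OF G(1) \<tau>]
          coeffwise_tendsto_subseq[OF G(1) \<tau>]] H(1)] .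
  moreover have "g * g * h \<noteq> 0"
    using G(2) H(2) by simp
  moreover have "P (\<sigma> (\<tau> n)) = smult [:a (\<tau> n) * a (\<tau> n) * b n:] (Q n)" for n
    unfolding fac r_eq s_eq Q_def by simp
  ultimately obtain c where p_eq: "p = smult [:c:] (g * g * h)"
    by (rule coeffwise_tendsto_proportional)
  have "c \<noteq> 0"
    using \<open>p \<noteq> 0\<close> p_eq by auto
  have "eventually (\<lambda>n. total_degree g \<le> total_degree (r (\<sigma> (\<tau> n))) \<and>
                        total_degree h \<le> total_degree (s (\<sigma> (\<tau> n)))) sequentially"
    using coeffwise_tendsto_eventually_total_degree_ge[OF coeffwise_tendsto_subseq[OF G(1) \<tau>]]
      coeffwise_tendsto_eventually_total_degree_ge[OF H(1)]
    by eventually_elim (simp add: deg_G deg_H)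
  then obtain m where "total_degree g \<le> total_degree (r m)" "total_degree h \<le> total_degree (s m)"
    unfolding eventually_sequentially by blast
  moreover have "p = g * g * smult [:c:] h"
    by (simp add: p_eq)
  ultimately show ?thesis
    using that total_degree_smult[OF \<open>c \<noteq> 0\<close>] by metis
qed

lemma has_multiple_factor_of_limit_nonzero:
  assumes lim: "coeffwise_tendsto P p" and "p \<noteq> 0"
    and nz: "\<And>n. P n \<noteq> 0"
    and deg: "\<And>n. total_degree (P n) \<le> total_degree p + 1"
    and mf: "\<And>n. has_multiple_factor (P n)"
  shows "has_multiple_factor p"
proof -
  have "\<forall>n. \<exists>r s. 1 \<le> total_degree r \<and> P n = r * r * s"
    using mf unfolding has_multiple_factor_def dvd_def power2_eq_square by blast
  then obtain r s where deg_r: "\<And>n. 1 \<le> total_degree (r n)" and fac: "\<And>n. P n = r n * r n * s n"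
    by metis
  have r_nz: "r n \<noteq> 0" and s_nz: "s n \<noteq> 0" for n
    using nz[of n] fac[of n] by auto
  have deg_rs: "2 * total_degree (r n) + total_degree (s n) = total_degree (P n)" for n
    using r_nz[of n] s_nz[of n] by (simp add: fac[of n] total_degree_mult)
  have "total_degree (r n) \<le> total_degree p + 1" "total_degree (s n) \<le> total_degree p + 1" for n
    using deg_rs[of n] deg[of n] by linarith+
  then obtain g h m where p_eq: "p = g * g * h"
    and "total_degree g \<le> total_degree (r m)" "total_degree h \<le> total_degree (s m)"
    using coeffwise_limit_of_square_factorizations[OF lim \<open>p \<noteq> 0\<close> fac r_nz s_nz] by metis
  moreover have "total_degree p = 2 * total_degree g + total_degree h"
    using \<open>p \<noteq> 0\<close> by (simp add: p_eq total_degree_mult)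
  ultimately have "1 \<le> total_degree g"
    using deg_r[of m] deg_rs[of m] deg[of m] by linarith
  moreover have "g\<^sup>2 dvd p"
    by (simp add: p_eq power2_eq_square)
  ultimately show ?thesis
    unfolding has_multiple_factor_def by blast
qed

lemma has_multiple_factor_of_limit:
  assumes lim: "coeffwise_tendsto P p" and "p \<noteq> 0"
    and deg: "\<And>n. total_degree (P n) \<le> total_degree p + 1"
    and mf: "\<And>n. has_multiple_factor (P n)"
  shows "has_multiple_factor p"
proof -
  obtain N where N: "\<And>n. n \<ge> N \<Longrightarrow> P n \<noteq> 0"
    using coeffwise_tendsto_eventually_nonzero[OF lim \<open>p \<noteq> 0\<close>]
    unfolding eventually_sequentially by blast
  have "strict_mono (\<lambda>n. n + N)"
    by (simp add: strict_mono_def)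
  with lim have "coeffwise_tendsto (\<lambda>n. P (n + N)) p"
    by (rule coeffwise_tendsto_subseq)
  then show ?thesis
    using \<open>p \<noteq> 0\<close> N deg mf by (rule has_multiple_factor_of_limit_nonzero) simp_all
qed

theorem mainTheorem4:
  fixes p1 p2 :: "real poly poly"
  assumes "p1 \<noteq> 0"
    and "total_degree p2 \<le> total_degree p1 + 1"
    and "\<not> has_multiple_factor p1"
  shows "\<exists>\<epsilon>0>0. \<forall>\<epsilon>::real. \<bar>\<epsilon>\<bar> < \<epsilon>0 \<longrightarrow>
           \<not> has_multiple_factor (p1 + smult [:\<epsilon>:] p2)"
proof (rule ccontr)
  assume "\<not> ?thesis"
  moreover have "0 < 1 / real (Suc n)" for n
    by simp
  ultimately have "\<exists>\<epsilon>. \<bar>\<epsilon>\<bar> < 1 / real (Suc n) \<and> has_multiple_factor (p1 + smult [:\<epsilon>:] p2)" for n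
    by blast
  then obtain e where e: "\<And>n. \<bar>e n\<bar> < 1 / real (Suc n)"
    and mf: "\<And>n. has_multiple_factor (p1 + smult [:e n:] p2)"
    by metis
  have "e \<longlonglongrightarrow> 0"
    by (rule LIMSEQ_norm_0) (use e in \<open>auto intro: less_imp_le\<close>)
  then have lim: "coeffwise_tendsto (\<lambda>n. p1 + smult [:e n:] p2) p1"
    by (rule coeffwise_tendsto_perturbation)
  have deg: "total_degree (p1 + smult [:e n:] p2) \<le> total_degree p1 + 1" for n
    using total_degree_smult_le[of "e n" p2] assms(2)
    by (intro total_degree_add_le) simp_all
  have "has_multiple_factor p1"
    using lim assms(1) deg mf by (rule has_multiple_factor_of_limit)
  with assms(3) show False ..
qed

end
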